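(* For every integer $n\ge 0$ and $x>0$, $$\big[\ln\partial_x,\ \partial_x\big]\, x^n = \frac{1}{x}\,\delta_{n0},$$ where $[A,B]=AB-BA$, $\partial_x$ is the ordinary derivative, $\delta_{n0}$ is the Kronecker delta, and $\ln\partial_x$ is defined in the context below (with $(\ln\partial_x)\,0 = 0$).
   Context: For real $\nu$, $x>0$ and $\mu\ge 0$, the fractional derivative of a power is defined by $\partial_x^\nu x^\mu = \frac{\Gamma(\mu+1)}{\Gamma(\mu-\nu+1)}\,x^{\mu-\nu}$. The logarithm of the derivative operator is defined on powers by $(\ln\partial_x)\,x^\mu := \lim_{\nu\to 0}\frac{\partial_x^\nu x^\mu - x^\mu}{\nu}$ and extended linearly; the operator $\partial_x\circ\ln\partial_x$ applies the ordinary derivative to the resulting function (which may contain $\ln x$). *)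

theory Defs
  imports "HOL-Analysis.Analysis"
begin

definition frac_deriv_pow :: "real \<Rightarrow> real \<Rightarrow> real \<Rightarrow> real" where
  "frac_deriv_pow \<nu> \<mu> x = Gamma (\<mu> + 1) / Gamma (\<mu> - \<nu> + 1) * x powr (\<mu> - \<nu>)"

definition ln_deriv_pow :: "real \<Rightarrow> real \<Rightarrow> real" where
  "ln_deriv_pow \<mu> x = Lim (at 0) (\<lambda>\<nu>. (frac_deriv_pow \<nu> \<mu> x - x powr \<mu>) / \<nu>)"

definition power_rep :: "(real \<Rightarrow> real) \<Rightarrow> (real \<Rightarrow> real) \<Rightarrow> bool" where
  "power_rep c f \<longleftrightarrow> finite {\<mu>. c \<mu> \<noteq> 0} \<and> (\<forall>\<mu>. c \<mu> \<noteq> 0 \<longrightarrow> \<mu> \<ge> 0) \<and>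
     (\<forall>y>0. f y = (\<Sum>\<mu>\<in>{\<mu>. c \<mu> \<noteq> 0}. c \<mu> * y powr \<mu>))"

text \<open>Linear extension of ln d/dx to finite combinations of powers
  (the representation is unique by linear independence of distinct powers).\<close>
definition ln_deriv :: "(real \<Rightarrow> real) \<Rightarrow> real \<Rightarrow> real" where
  "ln_deriv f x = (let c = (THE c. power_rep c f) in
      (\<Sum>\<mu>\<in>{\<mu>. c \<mu> \<noteq> 0}. c \<mu> * ln_deriv_pow \<mu> x))"

end

theory Submission
  imports Defs
begin

text \<open>Differentiating the fractional derivative in the order \<open>\<nu>\<close> at \<open>\<nu> = 0\<close> gives
  \<open>(ln \<partial>) x\<^sup>\<mu> = x\<^sup>\<mu> (\<psi>(\<mu>+1) - ln x)\<close>, with \<open>\<psi>\<close> the digamma function. Hence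
  \<open>ln \<partial> (\<partial> x\<^sup>n) = n x\<^sup>n\<^sup>-\<^sup>1 (\<psi>(n) - ln x)\<close>, while
  \<open>\<partial> (ln \<partial> x\<^sup>n) = n x\<^sup>n\<^sup>-\<^sup>1 (\<psi>(n+1) - ln x) - x\<^sup>n\<^sup>-\<^sup>1\<close>; the recurrence \<open>\<psi>(n+1) = \<psi>(n) + 1/n\<close>
  makes the two agree for \<open>n > 0\<close>, and for \<open>n = 0\<close> only the term \<open>1/x\<close> survives.
  That \<open>ln \<partial>\<close> is well defined on combinations of powers rests on the linear
  independence of distinct powers on \<open>x > 0\<close>.\<close>

lemma powr_linear_independent:
  fixes e :: "real \<Rightarrow> real"
  assumes "finite S" and "\<And>y. y > 0 \<Longrightarrow> (\<Sum>\<mu>\<in>S. e \<mu> * y powr \<mu>) = 0"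
  shows "\<forall>\<mu>\<in>S. e \<mu> = 0"
  using assms
proof (induction "card S" arbitrary: S rule: less_induct)
  case less
  show ?case
  proof (cases "S = {}")
    case False
    define m where "m = Min S"
    have "m \<in> S" using False less.prems(1) by (simp add: m_def)
    have m_le: "\<And>\<mu>. \<mu> \<in> S \<Longrightarrow> m \<le> \<mu>" using less.prems(1) by (simp add: m_def)
    text \<open>Dividing by \<open>y\<^sup>m\<close> and letting \<open>y \<rightarrow> 0\<^sup>+\<close> isolates the coefficient of the least exponent.\<close>
    have vanishes: "\<forall>\<^sub>F y in at_right 0. (\<Sum>\<mu>\<in>S. e \<mu> * y powr (\<mu> - m)) = 0"
    proof (rule eventually_mono[OF eventually_at_right_less[of "0::real"]])
      fix y :: real assume "y > 0"
      have "(\<Sum>\<mu>\<in>S. e \<mu> * y powr (\<mu> - m)) = (\<Sum>\<mu>\<in>S. e \<mu> * y powr \<mu>) / y powr m"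
        by (simp add: powr_diff sum_divide_distrib)
      then show "(\<Sum>\<mu>\<in>S. e \<mu> * y powr (\<mu> - m)) = 0" using less.prems(2) \<open>y > 0\<close> by simp
    qed
    have "((\<lambda>y. \<Sum>\<mu>\<in>S. e \<mu> * y powr (\<mu> - m)) \<longlongrightarrow> (\<Sum>\<mu>\<in>S. if \<mu> = m then e \<mu> else 0)) (at_right 0)"
    proof (rule tendsto_sum)
      fix \<mu> assume "\<mu> \<in> S"
      show "((\<lambda>y. e \<mu> * y powr (\<mu> - m)) \<longlongrightarrow> (if \<mu> = m then e \<mu> else 0)) (at_right 0)"
      proof (cases "\<mu> = m")
        case True
        have "\<forall>\<^sub>F y in at_right 0. e \<mu> = e \<mu> * y powr (\<mu> - m)"
          using eventually_at_right_less[of "0::real"] by (rule eventually_mono) (simp add: True)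
        then show ?thesis using True by (simp add: Lim_transform_eventually[OF tendsto_const])
      next
        case False
        then have "\<mu> - m > 0" using m_le[OF \<open>\<mu> \<in> S\<close>] by simp
        then have "((\<lambda>y::real. y powr (\<mu> - m)) \<longlongrightarrow> 0) (at_right 0)"
          by (intro tendsto_zero_powrI) (auto intro: tendsto_ident_at eventually_at_rightI[of 0 1])
        then show ?thesis using False tendsto_mult_right_zero by auto
      qed
    qed
    moreover have "((\<lambda>y. \<Sum>\<mu>\<in>S. e \<mu> * y powr (\<mu> - m)) \<longlongrightarrow> 0) (at_right (0::real))"
      using vanishes by (simp add: Lim_transform_eventually[OF tendsto_const] eventually_mono)
    ultimately have "(\<Sum>\<mu>\<in>S. if \<mu> = m then e \<mu> else 0) = 0"
      by (intro tendsto_unique[of "at_right (0::real)"]) auto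
    then have "e m = 0" using less.prems(1) \<open>m \<in> S\<close> by (simp add: sum.delta)
    have "card (S - {m}) < card S" using \<open>m \<in> S\<close> less.prems(1) by (meson card_Diff1_less)
    moreover have "(\<Sum>\<mu>\<in>S - {m}. e \<mu> * y powr \<mu>) = 0" if "y > 0" for y
      using less.prems(2)[OF that] sum.remove[OF less.prems(1) \<open>m \<in> S\<close>, of "\<lambda>\<mu>. e \<mu> * y powr \<mu>"] \<open>e m = 0\<close> by simp
    ultimately have "\<forall>\<mu>\<in>S - {m}. e \<mu> = 0" using less.hyps less.prems(1) by blast
    then show ?thesis using \<open>e m = 0\<close> by auto
  qed simp
qed

lemma power_rep_unique:
  assumes "power_rep c f" and "power_rep d f"
  shows "c = d"
proof -
  define S where "S = {\<mu>. c \<mu> \<noteq> 0} \<union> {\<mu>. d \<mu> \<noteq> 0}"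
  have "finite S" using assms by (simp add: S_def power_rep_def)
  have sum_eq: "(\<Sum>\<mu>\<in>S. a \<mu> * y powr \<mu>) = f y"
    if "power_rep a f" "{\<mu>. a \<mu> \<noteq> 0} \<subseteq> S" "y > 0" for a y
  proof -
    have "(\<Sum>\<mu>\<in>S. a \<mu> * y powr \<mu>) = (\<Sum>\<mu>\<in>{\<mu>. a \<mu> \<noteq> 0}. a \<mu> * y powr \<mu>)"
      using that(2) by (intro sum.mono_neutral_right[OF \<open>finite S\<close>]) auto
    then show ?thesis using that by (simp add: power_rep_def)
  qed
  have "(\<Sum>\<mu>\<in>S. (c \<mu> - d \<mu>) * y powr \<mu>) = 0" if "y > 0" for y
  proof -
    have "(\<Sum>\<mu>\<in>S. c \<mu> * y powr \<mu>) = f y" by (rule sum_eq[OF assms(1) _ that]) (auto simp: S_def)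
    moreover have "(\<Sum>\<mu>\<in>S. d \<mu> * y powr \<mu>) = f y" by (rule sum_eq[OF assms(2) _ that]) (auto simp: S_def)
    ultimately show ?thesis by (simp add: left_diff_distrib sum_subtractf)
  qed
  from powr_linear_independent[OF \<open>finite S\<close> this] have coeff_diff: "\<forall>\<mu>\<in>S. c \<mu> - d \<mu> = 0" .
  have "c \<mu> = d \<mu>" for \<mu>
  proof (cases "\<mu> \<in> S")
    case True
    then show ?thesis using coeff_diff by simp
  next
    case False
    then show ?thesis unfolding S_def by simp
  qed
  then show "c = d" by (rule ext)
qed

lemma ln_deriv_eq_sum:
  assumes "power_rep c f"
  shows "ln_deriv f x = (\<Sum>\<mu>\<in>{\<mu>. c \<mu> \<noteq> 0}. c \<mu> * ln_deriv_pow \<mu> x)"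
proof -
  have "(THE c. power_rep c f) = c"
    using assms power_rep_unique by blast
  then show ?thesis by (simp add: ln_deriv_def)
qed

lemma ln_deriv_monomial:
  assumes "\<mu> \<ge> 0" and "\<And>y. y > 0 \<Longrightarrow> f y = a * y powr \<mu>"
  shows "ln_deriv f x = a * ln_deriv_pow \<mu> x"
proof -
  define c where "c = (\<lambda>\<nu>. if \<nu> = \<mu> \<and> a \<noteq> 0 then a else 0)"
  have support: "{\<nu>. c \<nu> \<noteq> 0} = (if a = 0 then {} else {\<mu>})" by (auto simp: c_def)
  have "power_rep c f"
    unfolding power_rep_def support using assms by (auto simp: c_def)
  from ln_deriv_eq_sum[OF this, of x] show ?thesis unfolding support by (simp add: c_def)
qed

lemma frac_deriv_pow_zero:
  assumes "\<mu> \<ge> 0"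
  shows "frac_deriv_pow 0 \<mu> x = x powr \<mu>"
proof -
  have "Gamma (\<mu> + 1) > 0" using assms by (intro Gamma_real_pos) simp
  then show ?thesis by (simp add: frac_deriv_pow_def)
qed

lemma has_field_derivative_frac_deriv_pow_order:
  assumes "\<mu> \<ge> 0" and "x > 0"
  shows "((\<lambda>\<nu>. frac_deriv_pow \<nu> \<mu> x) has_field_derivative x powr \<mu> * (Digamma (\<mu> + 1) - ln x)) (at 0)"
proof -
  have "\<mu> + 1 \<notin> \<int>\<^sub>\<le>\<^sub>0" using assms(1) by (auto elim!: nonpos_Ints_cases)
  have "Gamma (\<mu> + 1) > 0" using assms(1) by (intro Gamma_real_pos) simp
  then have "Gamma (\<mu> + 1) * rGamma (\<mu> + 1) = 1" by (simp add: rGamma_inverse_Gamma)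
  have "(rGamma has_field_derivative - rGamma (\<mu> - 0 + 1) * Digamma (\<mu> - 0 + 1)) (at (\<mu> - 0 + 1))"
    using has_field_derivative_rGamma_no_nonpos_int[OF \<open>\<mu> + 1 \<notin> \<int>\<^sub>\<le>\<^sub>0\<close>] by simp
  moreover have "((\<lambda>\<nu>::real. \<mu> - \<nu> + 1) has_field_derivative -1) (at 0)"
    by (auto intro!: derivative_eq_intros)
  ultimately have rGamma: "((\<lambda>\<nu>. rGamma (\<mu> - \<nu> + 1)) has_field_derivative rGamma (\<mu> + 1) * Digamma (\<mu> + 1)) (at 0)"
    using DERIV_chain2 by fastforce
  have powr: "((\<lambda>\<nu>. x powr (\<mu> - \<nu>)) has_field_derivative - ln x * x powr \<mu>) (at 0)"
    using assms(2) by (auto intro!: derivative_eq_intros simp: powr_def)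
  have frac_deriv_pow_eq:
    "frac_deriv_pow \<nu> \<mu> x = Gamma (\<mu> + 1) * (rGamma (\<mu> - \<nu> + 1) * x powr (\<mu> - \<nu>))" for \<nu>
    by (simp add: frac_deriv_pow_def rGamma_inverse_Gamma divide_inverse)
  have "((\<lambda>\<nu>. Gamma (\<mu> + 1) * (rGamma (\<mu> - \<nu> + 1) * x powr (\<mu> - \<nu>))) has_field_derivative
      (Gamma (\<mu> + 1) * rGamma (\<mu> + 1)) * (x powr \<mu> * (Digamma (\<mu> + 1) - ln x))) (at 0)"
    using DERIV_cmult[OF DERIV_mult[OF rGamma powr], of "Gamma (\<mu> + 1)"]
    by (simp add: algebra_simps)
  then show ?thesis
    unfolding frac_deriv_pow_eq \<open>Gamma (\<mu> + 1) * rGamma (\<mu> + 1) = 1\<close> mult_1_left .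
qed

lemma ln_deriv_pow_eq:
  assumes "\<mu> \<ge> 0" and "x > 0"
  shows "ln_deriv_pow \<mu> x = x powr \<mu> * (Digamma (\<mu> + 1) - ln x)"
proof -
  have "((\<lambda>\<nu>. (frac_deriv_pow \<nu> \<mu> x - x powr \<mu>) / \<nu>) \<longlongrightarrow> x powr \<mu> * (Digamma (\<mu> + 1) - ln x)) (at 0)"
    using has_field_derivative_frac_deriv_pow_order[OF assms]
    by (simp add: has_field_derivative_iff frac_deriv_pow_zero[OF assms(1)])
  then show ?thesis unfolding ln_deriv_pow_def by (rule tendsto_Lim[rotated]) simp
qed

lemma ln_deriv_scaled_power:
  assumes "y > 0"
  shows "ln_deriv (\<lambda>t. a * t ^ m) y = a * y ^ m * (Digamma (real m + 1) - ln y)"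
proof -
  have "ln_deriv (\<lambda>t. a * t ^ m) y = a * ln_deriv_pow (real m) y"
    by (rule ln_deriv_monomial) (auto simp: powr_realpow)
  then show ?thesis using ln_deriv_pow_eq[of "real m" y] assms by (simp add: powr_realpow)
qed

lemma deriv_power_fun: "deriv (\<lambda>t::real. t ^ n) = (\<lambda>y. real n * y ^ (n - 1))"
  using DERIV_pow[of n _ UNIV] by (intro ext DERIV_imp_deriv) simp

lemma deriv_ln_deriv_power:
  assumes "x > 0"
  shows "deriv (\<lambda>y. ln_deriv (\<lambda>t. t ^ n) y) x
     = real n * x ^ (n - 1) * (Digamma (real n + 1) - ln x) - x ^ n / x"
proof -
  have "((\<lambda>y. y ^ n * (Digamma (real n + 1) - ln y)) has_field_derivative
      real n * x ^ (n - 1) * (Digamma (real n + 1) - ln x) - x ^ n / x) (at x)"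
    using assms by (auto intro!: derivative_eq_intros)
  then have "((\<lambda>y. ln_deriv (\<lambda>t. t ^ n) y) has_field_derivative
      real n * x ^ (n - 1) * (Digamma (real n + 1) - ln x) - x ^ n / x) (at x)"
    by (rule has_field_derivative_transform_within_open[where S="{0<..}"])
       (use assms ln_deriv_scaled_power[of _ 1 n] in auto)
  then show ?thesis by (rule DERIV_imp_deriv)
qed

theorem mainTheorem5:
  fixes n :: nat and x :: real
  assumes "x > 0"
  shows "ln_deriv (\<lambda>y. deriv (\<lambda>t. t ^ n) y) x - deriv (\<lambda>y. ln_deriv (\<lambda>t. t ^ n) y) x
           = (if n = 0 then 1 / x else 0)"
proof -
  have ln_deriv_deriv: "ln_deriv (\<lambda>y. deriv (\<lambda>t. t ^ n) y) x
      = real n * x ^ (n - 1) * (Digamma (real (n - 1) + 1) - ln x)"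
    using ln_deriv_scaled_power[OF assms] by (simp add: deriv_power_fun)
  show ?thesis
  proof (cases "n = 0")
    case True
    then show ?thesis using deriv_ln_deriv_power[OF assms, of 0] ln_deriv_deriv by simp
  next
    case False
    have "real (n - 1) + 1 = real n" using False by (simp add: of_nat_diff)
    moreover have "Digamma (real n + 1) = Digamma (real n) + 1 / real n"
      using Digamma_plus1[of "real n"] False by simp
    moreover have "x ^ n / x = x ^ (n - 1)" using False assms by (cases n) auto
    ultimately show ?thesis
      unfolding ln_deriv_deriv deriv_ln_deriv_power[OF assms] using False by (simp add: algebra_simps)
  qed
qed

end
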